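(* Let $X$ be a topological space and $x\in X$. Then $\mathrm{cl}_\theta(\{x\})$ is a finitely non-Urysohn subset of $X$ that contains $x$.
   Context: For $A\subseteq X$, $\mathrm{cl}_\theta(A):=\{y\in X:\ \overline{B}\cap A\neq\emptyset$ for every open neighborhood $B$ of $y\}$. A non-empty subset $A$ of $X$ is finitely non-Urysohn if for every non-empty finite $F\subseteq A$ and every family $\{U_y:y\in F\}$ of open neighborhoods $U_y$ of $y$, $\bigcap_{y\in F}\overline{U_y}\neq\emptyset$. *)

theory Defs
  imports "HOL-Analysis.Analysis"
begin

definition theta_closure_of :: "'a topology \<Rightarrow> 'a set \<Rightarrow> 'a set" where
  "theta_closure_of X A =
     {y \<in> topspace X. \<forall>B. openin X B \<and> y \<in> B \<longrightarrow> (X closure_of B) \<inter> A \<noteq> {}}"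

definition finitely_non_urysohn :: "'a topology \<Rightarrow> 'a set \<Rightarrow> bool" where
  "finitely_non_urysohn X A \<longleftrightarrow>
     A \<subseteq> topspace X \<and> A \<noteq> {} \<and>
     (\<forall>F U. finite F \<and> F \<noteq> {} \<and> F \<subseteq> A \<and>
            (\<forall>y\<in>F. openin X (U y) \<and> y \<in> U y)
            \<longrightarrow> (\<Inter>y\<in>F. X closure_of (U y)) \<noteq> {})"

end

theory Submission
  imports Defs
begin

text \<open>Every point of the theta-closure of a singleton \<open>{x}\<close> has \<open>x\<close> in the closure of each
of its open neighbourhoods, so \<open>x\<close> itself is a common point of any finite family of such
closures.\<close>

lemma in_theta_closure_of_self:
  assumes "x \<in> topspace X"
  shows "x \<in> theta_closure_of X {x}"
  using assms by (auto simp: theta_closure_of_def closure_of_def)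

lemma theta_closure_of_singleton_in_closure_of:
  assumes "y \<in> theta_closure_of X {x}" and "openin X U" and "y \<in> U"
  shows "x \<in> X closure_of U"
  using assms by (auto simp: theta_closure_of_def)

lemma finitely_non_urysohn_if_common_adherent_point:
  assumes "A \<subseteq> topspace X" and "A \<noteq> {}"
    and "\<And>y U. y \<in> A \<Longrightarrow> openin X U \<Longrightarrow> y \<in> U \<Longrightarrow> x \<in> X closure_of U"
  shows "finitely_non_urysohn X A"
  unfolding finitely_non_urysohn_def
proof (intro conjI allI impI)
  fix F U
  assume "finite F \<and> F \<noteq> {} \<and> F \<subseteq> A \<and> (\<forall>y\<in>F. openin X (U y) \<and> y \<in> U y)"
  then have "x \<in> (\<Inter>y\<in>F. X closure_of (U y))"
    using assms(3) by blast
  then show "(\<Inter>y\<in>F. X closure_of (U y)) \<noteq> {}"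
    by blast
qed (use assms in auto)

theorem corollary2p17:
  fixes X :: "'a topology" and x :: 'a
  assumes "x \<in> topspace X"
  shows "finitely_non_urysohn X (theta_closure_of X {x}) \<and> x \<in> theta_closure_of X {x}"
proof
  show x_in: "x \<in> theta_closure_of X {x}"
    using assms by (rule in_theta_closure_of_self)
  have "theta_closure_of X {x} \<subseteq> topspace X"
    by (auto simp: theta_closure_of_def)
  then show "finitely_non_urysohn X (theta_closure_of X {x})"
    using x_in theta_closure_of_singleton_in_closure_of
    by (intro finitely_non_urysohn_if_common_adherent_point) auto
qed

end
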